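(* Let $\mathfrak{s}=\bigoplus\mathfrak{s}^p$ be a grading of depth one of a simple Lie superalgebra. Any graded subalgebra $\mathfrak{s}\subset\mathfrak{g}\subset\mathrm{der}(\mathfrak{s})$ is of the form $\mathfrak{g}=\mathfrak{s}\rtimes F$ for some graded subalgebra $F=\mathfrak{g}\cap\mathrm{out}(\mathfrak{s})$ of $\mathrm{out}(\mathfrak{s})$ and it is a transitive nonlinear $\mathbb{Z}$-graded Lie superalgebra. Moreover it is of depth one and irreducible if and only if the depth $d(F)\leq 0$ (i.e. $F$ is graded in nonnegative degrees).
   Context: $\mathfrak{s}$ is a finite-dimensional complex simple Lie superalgebra, $\mathrm{der}(\mathfrak{s})=\mathfrak{s}\rtimes\mathrm{out}(\mathfrak{s})$ (semidirect sum, $\mathfrak{s}$ the ideal, $\mathrm{out}(\mathfrak{s})$ a subalgebra of outer derivations, stable under the grading), with the grading induced by that of $\mathfrak{s}$. A $\mathbb{Z}$-graded Lie superalgebra $\mathfrak{g}=\bigoplus\mathfrak{g}^p$ is transitive if $x\in\mathfrak{g}^p$, $p\ge0$, $[x,\mathfrak{g}^{-1}]=0$ implies $x=0$; irreducible if $\mathfrak{g}^0$ acts irreducibly on $\mathfrak{g}^{-1}$; nonlinear if $\mathfrak{g}^1\neq0$. *)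

theory Defs
  imports Complex_Main
begin

text \<open>A finite-dimensional complex Lie superalgebra is modelled on a type 'a of class
cvec (the whole type is the superalgebra s), with bracket br, and parity
subspaces V False (even) and V True (odd).\<close>

text \<open>Complex vector spaces (the library only provides real_vector in Complex_Main).\<close>
class cvec = ab_group_add +
  fixes cscale :: "complex \<Rightarrow> 'a \<Rightarrow> 'a" (infixr \<open>*\<^sub>C\<close> 75)
  assumes cscale_right_distrib: "a *\<^sub>C (x + y) = a *\<^sub>C x + a *\<^sub>C y"
    and cscale_left_distrib: "(a + b) *\<^sub>C x = a *\<^sub>C x + b *\<^sub>C x"
    and cscale_cscale: "a *\<^sub>C (b *\<^sub>C x) = (a * b) *\<^sub>C x"
    and cscale_one: "1 *\<^sub>C x = x"

definition psgn :: "bool \<Rightarrow> bool \<Rightarrow> complex" where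
  "psgn a b = (if a \<and> b then -1 else 1)"

definition csubspace :: "'a::cvec set \<Rightarrow> bool" where
  "csubspace A \<longleftrightarrow> 0 \<in> A \<and> (\<forall>x\<in>A. \<forall>y\<in>A. x + y \<in> A) \<and> (\<forall>c. \<forall>x\<in>A. c *\<^sub>C x \<in> A)"

definition clinear_map :: "('a::cvec \<Rightarrow> 'b::cvec) \<Rightarrow> bool" where
  "clinear_map f \<longleftrightarrow> (\<forall>x y. f (x + y) = f x + f y) \<and> (\<forall>c x. f (c *\<^sub>C x) = c *\<^sub>C f x)"

definition fin_dim_C :: "'a::cvec set \<Rightarrow> bool" where
  "fin_dim_C T \<longleftrightarrow> (\<exists>B. finite B \<and> (\<forall>x\<in>T. \<exists>c. x = (\<Sum>b\<in>B. c b *\<^sub>C b)))"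

definition super_decomp :: "(bool \<Rightarrow> 'a::cvec set) \<Rightarrow> bool" where
  "super_decomp V \<longleftrightarrow> csubspace (V False) \<and> csubspace (V True) \<and>
     V False \<inter> V True = {0} \<and> (\<forall>x. \<exists>y\<in>V False. \<exists>z\<in>V True. x = y + z)"

definition par_proj :: "(bool \<Rightarrow> 'a::cvec set) \<Rightarrow> bool \<Rightarrow> 'a \<Rightarrow> 'a" where
  "par_proj V b x = (THE y. y \<in> V b \<and> x - y \<in> V (\<not> b))"

definition lie_superalgebra :: "('a::cvec \<Rightarrow> 'a \<Rightarrow> 'a) \<Rightarrow> (bool \<Rightarrow> 'a set) \<Rightarrow> bool" where
  "lie_superalgebra br V \<longleftrightarrow> super_decomp V \<and>
     (\<forall>x y z. br (x + y) z = br x z + br y z) \<and>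
     (\<forall>c x z. br (c *\<^sub>C x) z = c *\<^sub>C br x z) \<and>
     (\<forall>x y z. br z (x + y) = br z x + br z y) \<and>
     (\<forall>c x z. br z (c *\<^sub>C x) = c *\<^sub>C br z x) \<and>
     (\<forall>a b x y. x \<in> V a \<longrightarrow> y \<in> V b \<longrightarrow> br x y \<in> V (a \<noteq> b)) \<and>
     (\<forall>a b x y. x \<in> V a \<longrightarrow> y \<in> V b \<longrightarrow> br x y = - (psgn a b *\<^sub>C br y x)) \<and>
     (\<forall>a b x y z. x \<in> V a \<longrightarrow> y \<in> V b \<longrightarrow>
        br x (br y z) = br (br x y) z + psgn a b *\<^sub>C br y (br x z))"

definition graded_ideal :: "('a::cvec \<Rightarrow> 'a \<Rightarrow> 'a) \<Rightarrow> (bool \<Rightarrow> 'a set) \<Rightarrow> 'a set \<Rightarrow> bool" where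
  "graded_ideal br V I \<longleftrightarrow> csubspace I \<and> (\<forall>x\<in>I. \<forall>b. par_proj V b x \<in> I) \<and>
     (\<forall>x. \<forall>y\<in>I. br x y \<in> I)"

definition simple_lsa :: "('a::cvec \<Rightarrow> 'a \<Rightarrow> 'a) \<Rightarrow> (bool \<Rightarrow> 'a set) \<Rightarrow> bool" where
  "simple_lsa br V \<longleftrightarrow> lie_superalgebra br V \<and> (\<exists>x y. br x y \<noteq> 0) \<and>
     (\<forall>I. graded_ideal br V I \<longrightarrow> I = {0} \<or> I = UNIV)"

definition z_grading :: "('a::cvec \<Rightarrow> 'a \<Rightarrow> 'a) \<Rightarrow> (bool \<Rightarrow> 'a set) \<Rightarrow> (int \<Rightarrow> 'a set) \<Rightarrow> bool" where
  "z_grading br V S \<longleftrightarrow> (\<forall>p. csubspace (S p)) \<and> finite {p. S p \<noteq> {0}} \<and>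
     (\<forall>x. \<exists>!f. (\<forall>p. f p \<in> S p) \<and> x = sum f {p. S p \<noteq> {0}}) \<and>
     (\<forall>p b x. x \<in> S p \<longrightarrow> par_proj V b x \<in> S p) \<and>
     (\<forall>p q x y. x \<in> S p \<longrightarrow> y \<in> S q \<longrightarrow> br x y \<in> S (p + q))"

definition depth_one :: "(int \<Rightarrow> 'a::cvec set) \<Rightarrow> bool" where
  "depth_one S \<longleftrightarrow> S (-1) \<noteq> {0} \<and> (\<forall>p < -1. S p = {0})"

definition zproj :: "(int \<Rightarrow> 'a::cvec set) \<Rightarrow> int \<Rightarrow> 'a \<Rightarrow> 'a" where
  "zproj S p x = (THE f. (\<forall>q. f q \<in> S q) \<and> x = sum f {q. S q \<noteq> {0}}) p"

definition sder :: "('a::cvec \<Rightarrow> 'a \<Rightarrow> 'a) \<Rightarrow> (bool \<Rightarrow> 'a set) \<Rightarrow> bool \<Rightarrow> ('a \<Rightarrow> 'a) \<Rightarrow> bool" where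
  "sder br V a D \<longleftrightarrow> clinear_map D \<and> (\<forall>b x. x \<in> V b \<longrightarrow> D x \<in> V (a \<noteq> b)) \<and>
     (\<forall>b x y. x \<in> V b \<longrightarrow> D (br x y) = br (D x) y + psgn a b *\<^sub>C br x (D y))"

definition der :: "('a::cvec \<Rightarrow> 'a \<Rightarrow> 'a) \<Rightarrow> (bool \<Rightarrow> 'a set) \<Rightarrow> ('a \<Rightarrow> 'a) set" where
  "der br V = {D. \<exists>D0 D1. sder br V False D0 \<and> sder br V True D1 \<and> D = (\<lambda>x. D0 x + D1 x)}"

definition dpar :: "(bool \<Rightarrow> 'a::cvec set) \<Rightarrow> bool \<Rightarrow> ('a \<Rightarrow> 'a) \<Rightarrow> 'a \<Rightarrow> 'a" where
  "dpar V b D = (\<lambda>x. par_proj V b (D (par_proj V False x)) + par_proj V (\<not> b) (D (par_proj V True x)))"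

text \<open>Supercommutator bracket on der(s), extended bilinearly.\<close>
definition dbr :: "(bool \<Rightarrow> 'a::cvec set) \<Rightarrow> ('a \<Rightarrow> 'a) \<Rightarrow> ('a \<Rightarrow> 'a) \<Rightarrow> 'a \<Rightarrow> 'a" where
  "dbr V D E = (\<lambda>x. \<Sum>(a, b)\<in>(UNIV :: (bool \<times> bool) set).
      dpar V a D (dpar V b E x) - psgn a b *\<^sub>C dpar V b E (dpar V a D x))"

definition dcomp :: "(int \<Rightarrow> 'a::cvec set) \<Rightarrow> int \<Rightarrow> ('a \<Rightarrow> 'a) \<Rightarrow> 'a \<Rightarrow> 'a" where
  "dcomp S k D = (\<lambda>x. \<Sum>p\<in>{p. S p \<noteq> {0}}. zproj S (p + k) (D (zproj S p x)))"

definition der_deg :: "('a::cvec \<Rightarrow> 'a \<Rightarrow> 'a) \<Rightarrow> (bool \<Rightarrow> 'a set) \<Rightarrow> (int \<Rightarrow> 'a set) \<Rightarrow> int \<Rightarrow> ('a \<Rightarrow> 'a) set" where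
  "der_deg br V S k = {D \<in> der br V. \<forall>p. D ` S p \<subseteq> S (p + k)}"

definition fsubspace :: "('a \<Rightarrow> 'b::cvec) set \<Rightarrow> bool" where
  "fsubspace G \<longleftrightarrow> (\<lambda>_. 0) \<in> G \<and> (\<forall>D\<in>G. \<forall>E\<in>G. (\<lambda>x. D x + E x) \<in> G) \<and>
     (\<forall>c. \<forall>D\<in>G. (\<lambda>x. c *\<^sub>C D x) \<in> G)"

definition subalg_der :: "(bool \<Rightarrow> 'a::cvec set) \<Rightarrow> ('a \<Rightarrow> 'a) set \<Rightarrow> bool" where
  "subalg_der V G \<longleftrightarrow> fsubspace G \<and> (\<forall>D\<in>G. \<forall>E\<in>G. dbr V D E \<in> G)"

definition graded_sub :: "(bool \<Rightarrow> 'a::cvec set) \<Rightarrow> (int \<Rightarrow> 'a set) \<Rightarrow> ('a \<Rightarrow> 'a) set \<Rightarrow> bool" where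
  "graded_sub V S G \<longleftrightarrow> (\<forall>D\<in>G. \<forall>k. dcomp S k D \<in> G) \<and> (\<forall>D\<in>G. \<forall>b. dpar V b D \<in> G)"

text \<open>out(s): a graded subalgebra of der(s) complementary to ad(s).\<close>
definition out_complement :: "('a::cvec \<Rightarrow> 'a \<Rightarrow> 'a) \<Rightarrow> (bool \<Rightarrow> 'a set) \<Rightarrow> (int \<Rightarrow> 'a set) \<Rightarrow> ('a \<Rightarrow> 'a) set \<Rightarrow> bool" where
  "out_complement br V S Out \<longleftrightarrow> Out \<subseteq> der br V \<and> subalg_der V Out \<and> graded_sub V S Out \<and>
     (\<forall>D\<in>der br V. \<exists>x. \<exists>E\<in>Out. D = (\<lambda>y. br x y + E y)) \<and>
     (\<forall>x. br x \<in> Out \<longrightarrow> br x = (\<lambda>_. 0))"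

definition gdeg :: "('a::cvec \<Rightarrow> 'a \<Rightarrow> 'a) \<Rightarrow> (bool \<Rightarrow> 'a set) \<Rightarrow> (int \<Rightarrow> 'a set) \<Rightarrow> ('a \<Rightarrow> 'a) set \<Rightarrow> int \<Rightarrow> ('a \<Rightarrow> 'a) set" where
  "gdeg br V S G p = G \<inter> der_deg br V S p"

definition transitive_g :: "('a::cvec \<Rightarrow> 'a \<Rightarrow> 'a) \<Rightarrow> (bool \<Rightarrow> 'a set) \<Rightarrow> (int \<Rightarrow> 'a set) \<Rightarrow> ('a \<Rightarrow> 'a) set \<Rightarrow> bool" where
  "transitive_g br V S G \<longleftrightarrow> (\<forall>p \<ge> 0. \<forall>D\<in>gdeg br V S G p.
     (\<forall>E\<in>gdeg br V S G (-1). dbr V D E = (\<lambda>_. 0)) \<longrightarrow> D = (\<lambda>_. 0))"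

definition nonlinear_g :: "('a::cvec \<Rightarrow> 'a \<Rightarrow> 'a) \<Rightarrow> (bool \<Rightarrow> 'a set) \<Rightarrow> (int \<Rightarrow> 'a set) \<Rightarrow> ('a \<Rightarrow> 'a) set \<Rightarrow> bool" where
  "nonlinear_g br V S G \<longleftrightarrow> gdeg br V S G 1 \<noteq> {\<lambda>_. 0}"

definition depth_one_g :: "('a::cvec \<Rightarrow> 'a \<Rightarrow> 'a) \<Rightarrow> (bool \<Rightarrow> 'a set) \<Rightarrow> (int \<Rightarrow> 'a set) \<Rightarrow> ('a \<Rightarrow> 'a) set \<Rightarrow> bool" where
  "depth_one_g br V S G \<longleftrightarrow> gdeg br V S G (-1) \<noteq> {\<lambda>_. 0} \<and> (\<forall>p < -1. gdeg br V S G p = {\<lambda>_. 0})"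

definition irreducible_g :: "('a::cvec \<Rightarrow> 'a \<Rightarrow> 'a) \<Rightarrow> (bool \<Rightarrow> 'a set) \<Rightarrow> (int \<Rightarrow> 'a set) \<Rightarrow> ('a \<Rightarrow> 'a) set \<Rightarrow> bool" where
  "irreducible_g br V S G \<longleftrightarrow> gdeg br V S G (-1) \<noteq> {\<lambda>_. 0} \<and>
     (\<forall>W. W \<subseteq> gdeg br V S G (-1) \<and> fsubspace W \<and> (\<forall>D\<in>W. \<forall>b. dpar V b D \<in> W) \<and>
        (\<forall>X\<in>gdeg br V S G 0. \<forall>D\<in>W. dbr V X D \<in> W) \<longrightarrow>
        W = {\<lambda>_. 0} \<or> W = gdeg br V S G (-1))"

end

theory Submission
  imports Defs
begin

text \<open>Two consequences of simplicity drive the proof: the centre of \<open>s\<close> is trivial, and \<open>s\<close>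
  itself is transitive, because an element of degree \<open>\<ge> 0\<close> commuting with \<open>s\<^sup>-\<^sup>1\<close> generates a
  graded ideal (its closure under \<open>ad s\<^sup>p\<close>, \<open>p \<ge> 0\<close>) whose degree \<open>-1\<close> part is zero.
  Since \<open>[D, ad y] = ad (D y)\<close>, a derivation of degree \<open>\<ge> 0\<close> killing \<open>ad s\<^sup>-\<^sup>1\<close> kills
  \<open>s\<^sup>-\<^sup>1\<close>, and then every \<open>s\<^sup>q\<close> by induction on \<open>q\<close>; this is transitivity of \<open>g\<close>.
  Nonlinearity holds since for \<open>s\<^sup>1 = 0\<close> transitivity would kill all positive degrees,
  making \<open>s\<^sup>-\<^sup>1\<close> an ideal, hence all of \<open>s\<close>, although \<open>[s\<^sup>-\<^sup>1, s\<^sup>-\<^sup>1] = 0\<close>.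
  Writing \<open>D \<in> g\<^sup>p\<close> as \<open>ad x + E\<close> with \<open>E \<in> out(s)\<close>, the degree \<open>p\<close> part
  \<open>D - ad x\<^sub>p\<close> of \<open>E\<close> lies in \<open>F\<close>; so if \<open>F\<close> has no negative part, \<open>g\<^sup>p = ad s\<^sup>p\<close>
  for \<open>p < 0\<close>, and \<open>s\<^sup>-\<^sup>1\<close> is \<open>s\<^sup>0\<close>-irreducible by the same ideal argument. Conversely,
  irreducibility forces \<open>g\<^sup>-\<^sup>1 = ad s\<^sup>-\<^sup>1\<close>, which meets \<open>out(s)\<close> trivially.\<close>

lemma cscale_zero_left [simp]: "0 *\<^sub>C x = (0::'a::cvec)"
proof -
  have "0 *\<^sub>C x + 0 *\<^sub>C x = (0 *\<^sub>C x :: 'a)"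
    using cscale_left_distrib[of 0 0 x] by simp
  then show ?thesis by simp
qed

lemma cscale_zero_right [simp]: "c *\<^sub>C (0::'a::cvec) = 0"
proof -
  have "c *\<^sub>C 0 + c *\<^sub>C 0 = (c *\<^sub>C 0 :: 'a)"
    using cscale_right_distrib[of c 0 0] by simp
  then show ?thesis by simp
qed

lemma cscale_minus_left: "(- c) *\<^sub>C x = - (c *\<^sub>C (x::'a::cvec))"
proof -
  have "c *\<^sub>C x + (- c) *\<^sub>C x = 0"
    using cscale_left_distrib[of c "- c" x] by simp
  then show ?thesis by (simp add: eq_neg_iff_add_eq_0 add.commute)
qed

lemma cscale_minus_one [simp]: "(- 1) *\<^sub>C x = - (x::'a::cvec)"
  by (simp add: cscale_minus_left cscale_one)

lemma cscale_minus_right: "c *\<^sub>C (- x) = - (c *\<^sub>C (x::'a::cvec))"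
  using cscale_cscale[of c "- 1" x] cscale_cscale[of "- 1" c x] by simp

lemma cscale_diff_right: "c *\<^sub>C (x - y) = c *\<^sub>C x - c *\<^sub>C (y::'a::cvec)"
  using cscale_right_distrib[of c x "- y"] by (simp add: cscale_minus_right)

lemma cscale_sum: "c *\<^sub>C sum f A = (\<Sum>i\<in>A. c *\<^sub>C (f i :: 'a::cvec))"
  by (induct A rule: infinite_finite_induct) (simp_all add: cscale_right_distrib)

lemma psgn_cscale_eq_0_iff [simp]: "psgn a b *\<^sub>C x = (0::'a::cvec) \<longleftrightarrow> x = 0"
proof
  assume "psgn a b *\<^sub>C x = 0"
  then have "psgn a b *\<^sub>C (psgn a b *\<^sub>C x) = 0" by simp
  then show "x = 0" by (cases "a \<and> b") (simp_all add: cscale_cscale psgn_def cscale_one)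
qed simp

lemma sum_UNIV_bool_pair:
  "(\<Sum>(a, b)\<in>(UNIV :: (bool \<times> bool) set). f a b)
     = f False False + f False True + f True False + (f True True :: 'a::comm_monoid_add)"
proof -
  have "(UNIV :: (bool \<times> bool) set) = {(False, False), (False, True), (True, False), (True, True)}"
    by auto
  show ?thesis unfolding \<open>UNIV = _\<close> by (simp add: ac_simps)
qed

lemma csubspace_0: "csubspace A \<Longrightarrow> 0 \<in> A"
  and csubspace_add: "csubspace A \<Longrightarrow> x \<in> A \<Longrightarrow> y \<in> A \<Longrightarrow> x + y \<in> A"
  and csubspace_scale: "csubspace A \<Longrightarrow> x \<in> A \<Longrightarrow> c *\<^sub>C x \<in> A"
  by (simp_all add: csubspace_def)

lemma csubspace_diff: "csubspace A \<Longrightarrow> x \<in> A \<Longrightarrow> y \<in> A \<Longrightarrow> x - y \<in> A"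
  using csubspace_add[of A x "(- 1) *\<^sub>C y"] csubspace_scale[of A y "- 1"] by simp

lemma csubspace_sum:
  "csubspace A \<Longrightarrow> (\<And>i. i \<in> I \<Longrightarrow> f i \<in> A) \<Longrightarrow> sum f I \<in> A"
  by (induct I rule: infinite_finite_induct) (auto simp: csubspace_0 csubspace_add)

lemma clinear_map_add: "clinear_map f \<Longrightarrow> f (x + y) = f x + f y"
  and clinear_map_scale: "clinear_map f \<Longrightarrow> f (c *\<^sub>C x) = c *\<^sub>C f x"
  by (simp_all add: clinear_map_def)

lemma clinear_map_0: "clinear_map f \<Longrightarrow> f 0 = 0"
  using clinear_map_scale[of f 0 0] by simp

lemma clinear_map_sum: "clinear_map f \<Longrightarrow> f (sum g A) = (\<Sum>i\<in>A. f (g i))"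
  by (induct A rule: infinite_finite_induct) (simp_all add: clinear_map_0 clinear_map_add)

lemma fsubspace_0: "fsubspace G \<Longrightarrow> (\<lambda>_. 0) \<in> G"
  and fsubspace_add: "fsubspace G \<Longrightarrow> D \<in> G \<Longrightarrow> E \<in> G \<Longrightarrow> (\<lambda>x. D x + E x) \<in> G"
  and fsubspace_scale: "fsubspace G \<Longrightarrow> D \<in> G \<Longrightarrow> (\<lambda>x. c *\<^sub>C D x) \<in> G"
  by (simp_all add: fsubspace_def)

lemma fsubspace_diff: "fsubspace G \<Longrightarrow> D \<in> G \<Longrightarrow> E \<in> G \<Longrightarrow> (\<lambda>x. D x - E x) \<in> G"
  using fsubspace_add[of G D "\<lambda>x. (- 1) *\<^sub>C E x"] fsubspace_scale[of G E "- 1"]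
  by simp

locale super_space =
  fixes V :: "bool \<Rightarrow> 'a::cvec set"
  assumes super_decomp: "super_decomp V"
begin

abbreviation pp :: "bool \<Rightarrow> 'a \<Rightarrow> 'a" where "pp \<equiv> par_proj V"

lemma csubspace_V: "csubspace (V b)"
  using super_decomp by (cases b) (simp_all add: super_decomp_def)

lemma zero_in_V [simp]: "0 \<in> V b"
  by (rule csubspace_0[OF csubspace_V])

lemma V_disjoint: "x \<in> V b \<Longrightarrow> x \<in> V (\<not> b) \<Longrightarrow> x = 0"
  using super_decomp by (cases b) (auto simp: super_decomp_def)

lemma par_proj_eqI:
  assumes "y \<in> V b" "x - y \<in> V (\<not> b)"
  shows "pp b x = y"
  unfolding par_proj_def
proof (rule the_equality)
  fix y' assume y': "y' \<in> V b \<and> x - y' \<in> V (\<not> b)"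
  have "y' - y \<in> V b"
    using csubspace_diff[OF csubspace_V] y' assms by blast
  moreover have "y' - y = (x - y) - (x - y')" by simp
  then have "y' - y \<in> V (\<not> b)"
    using csubspace_diff[OF csubspace_V] y' assms by metis
  ultimately show "y' = y" using V_disjoint by fastforce
qed (use assms in simp)

lemma par_proj_spec: "pp b x \<in> V b \<and> x - pp b x \<in> V (\<not> b)"
proof -
  obtain y z where yz: "y \<in> V False" "z \<in> V True" "x = y + z"
    using super_decomp unfolding super_decomp_def by blast
  then have "\<exists>w. w \<in> V b \<and> x - w \<in> V (\<not> b)"
    by (intro exI[of _ "if b then z else y"]) (cases b; simp)
  then show ?thesis using par_proj_eqI by metis
qed

lemma par_proj_in: "pp b x \<in> V b"
  using par_proj_spec by blast

lemma par_proj_split: "pp False x + pp True x = x"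
proof -
  have "pp True x = x - pp False x"
    using par_proj_spec[of False x] by (intro par_proj_eqI) simp_all
  then show ?thesis by simp
qed

lemma par_proj_homogeneous: "x \<in> V c \<Longrightarrow> pp b x = (if b = c then x else 0)"
  by (rule par_proj_eqI) (cases b; cases c; simp)+

lemma par_proj_0 [simp]: "pp b 0 = 0"
  using par_proj_homogeneous[OF zero_in_V] by simp

lemma par_proj_add: "pp b (x + y) = pp b x + pp b y"
proof (rule par_proj_eqI)
  show "pp b x + pp b y \<in> V b"
    by (rule csubspace_add[OF csubspace_V par_proj_in par_proj_in])
  have "x + y - (pp b x + pp b y) = (x - pp b x) + (y - pp b y)" by simp
  then show "x + y - (pp b x + pp b y) \<in> V (\<not> b)"
    using csubspace_add[OF csubspace_V] par_proj_spec by metis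
qed

lemma par_proj_scale: "pp b (c *\<^sub>C x) = c *\<^sub>C pp b x"
proof (rule par_proj_eqI)
  show "c *\<^sub>C pp b x \<in> V b" by (rule csubspace_scale[OF csubspace_V par_proj_in])
  show "c *\<^sub>C x - c *\<^sub>C pp b x \<in> V (\<not> b)"
    using csubspace_scale[OF csubspace_V] par_proj_spec by (metis cscale_diff_right)
qed

lemma par_proj_sum: "pp b (sum f A) = (\<Sum>i\<in>A. pp b (f i))"
  by (induct A rule: infinite_finite_induct) (simp_all add: par_proj_add)

lemma dpar_vanish: "D (pp False x) = 0 \<Longrightarrow> D (pp True x) = 0 \<Longrightarrow> dpar V a D x = 0"
  by (simp add: dpar_def)

end

locale super_lie =
  fixes br :: "'a::cvec \<Rightarrow> 'a \<Rightarrow> 'a" and V :: "bool \<Rightarrow> 'a set"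
  assumes lie: "lie_superalgebra br V"

sublocale super_lie \<subseteq> super_space V
  using lie by unfold_locales (simp add: lie_superalgebra_def)

context super_lie
begin

lemma br_add_left: "br (x + y) z = br x z + br y z"
  and br_scale_left: "br (c *\<^sub>C x) z = c *\<^sub>C br x z"
  and br_add_right: "br z (x + y) = br z x + br z y"
  and br_scale_right: "br z (c *\<^sub>C x) = c *\<^sub>C br z x"
  using lie unfolding lie_superalgebra_def by auto

lemma br_in_V: "x \<in> V a \<Longrightarrow> y \<in> V b \<Longrightarrow> br x y \<in> V (a \<noteq> b)"
  and br_anticomm: "x \<in> V a \<Longrightarrow> y \<in> V b \<Longrightarrow> br x y = - (psgn a b *\<^sub>C br y x)"
  and br_jacobi: "x \<in> V a \<Longrightarrow> y \<in> V b \<Longrightarrow>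
    br x (br y z) = br (br x y) z + psgn a b *\<^sub>C br y (br x z)"
  using lie unfolding lie_superalgebra_def by blast+

lemma clinear_map_br: "clinear_map (br x)"
  and clinear_map_br_left: "clinear_map (\<lambda>y. br y x)"
  by (simp_all add: clinear_map_def br_add_left br_add_right br_scale_left br_scale_right)

lemma ad_add: "br (x + y) = (\<lambda>z. br x z + br y z)"
  and ad_scale: "br (c *\<^sub>C x) = (\<lambda>z. c *\<^sub>C br x z)"
  by (simp_all add: fun_eq_iff br_add_left br_scale_left)

lemma br_zero_left [simp]: "br 0 = (\<lambda>_. 0)"
  using br_scale_left[of 0] by fastforce

lemma br_zero_right [simp]: "br x 0 = 0"
  by (rule clinear_map_0[OF clinear_map_br])

lemma br_sum_left: "br (sum f A) z = (\<Sum>i\<in>A. br (f i) z)"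
  by (rule clinear_map_sum[OF clinear_map_br_left])

lemma br_sum_right: "br z (sum f A) = (\<Sum>i\<in>A. br z (f i))"
  by (rule clinear_map_sum[OF clinear_map_br])

lemma br_split_left: "br x y = br (pp False x) y + br (pp True x) y"
  using br_add_left[of "pp False x" "pp True x" y] by (simp add: par_proj_split)

lemma br_split_right: "br x y = br x (pp False y) + br x (pp True y)"
  using br_add_right[of x "pp False y" "pp True y"] by (simp add: par_proj_split)

lemma br_par_proj_right:
  assumes "x \<in> V d"
  shows "br x (pp c y) = pp (d \<noteq> c) (br x y)"
proof -
  have "br x y = br x (pp c y) + br x (pp (\<not> c) y)"
    using br_split_right[of x y] by (cases c) (simp_all add: add.commute)
  moreover have "br x (pp c y) \<in> V (d \<noteq> c)" "br x (pp (\<not> c) y) \<in> V (d \<noteq> (\<not> c))"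
    using br_in_V[OF assms par_proj_in] by blast+
  ultimately show ?thesis
    using par_proj_homogeneous[of "br x (pp c y)" "d \<noteq> c" "d \<noteq> c"]
      par_proj_homogeneous[of "br x (pp (\<not> c) y)" "d \<noteq> (\<not> c)" "d \<noteq> c"]
    by (cases c; cases d) (simp_all add: par_proj_add)
qed

lemma br_par_proj_left:
  assumes "y \<in> V c"
  shows "br (pp b x) y = pp (b \<noteq> c) (br x y)"
proof -
  have "br x y = br (pp b x) y + br (pp (\<not> b) x) y"
    using br_split_left[of x y] by (cases b) (simp_all add: add.commute)
  moreover have "br (pp b x) y \<in> V (b \<noteq> c)" "br (pp (\<not> b) x) y \<in> V ((\<not> b) \<noteq> c)"
    using br_in_V[OF par_proj_in assms] by blast+
  ultimately show ?thesis
    using par_proj_homogeneous[of "br (pp b x) y" "b \<noteq> c" "b \<noteq> c"]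
      par_proj_homogeneous[of "br (pp (\<not> b) x) y" "(\<not> b) \<noteq> c" "b \<noteq> c"]
    by (cases b; cases c) (simp_all add: par_proj_add)
qed

lemma ad_sder: "y \<in> V a \<Longrightarrow> sder br V a (br y)"
  unfolding sder_def using clinear_map_br br_in_V br_jacobi by blast

lemma ad_der: "br y \<in> der br V"
  unfolding der_def
  using ad_sder[OF par_proj_in] br_split_left[of y] by blast

lemma sder_clinear: "sder br V a D \<Longrightarrow> clinear_map D"
  and sder_in_V: "sder br V a D \<Longrightarrow> x \<in> V b \<Longrightarrow> D x \<in> V (a \<noteq> b)"
  and sder_br: "sder br V a D \<Longrightarrow> x \<in> V b \<Longrightarrow> D (br x y) = br (D x) y + psgn a b *\<^sub>C br x (D y)"
  unfolding sder_def by blast+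

lemma dpar_sder_sum:
  assumes "sder br V False D0" "sder br V True D1"
  shows "dpar V a (\<lambda>x. D0 x + D1 x) = (if a then D1 else D0)"
proof
  fix x
  have "pp b (D0 (pp c x)) = (if b = c then D0 (pp c x) else 0)"
    and "pp b (D1 (pp c x)) = (if b = (\<not> c) then D1 (pp c x) else 0)" for b c
    using par_proj_homogeneous[OF sder_in_V[OF assms(1) par_proj_in]]
      par_proj_homogeneous[OF sder_in_V[OF assms(2) par_proj_in]] by simp_all
  moreover have "D0 (pp False x) + D0 (pp True x) = D0 x" "D1 (pp False x) + D1 (pp True x) = D1 x"
    using clinear_map_add[OF sder_clinear[OF assms(1)], of "pp False x" "pp True x"]
      clinear_map_add[OF sder_clinear[OF assms(2)], of "pp False x" "pp True x"]
    by (simp_all add: par_proj_split)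
  ultimately show "dpar V a (\<lambda>x. D0 x + D1 x) x = (if a then D1 else D0) x"
    by (cases a) (simp_all add: dpar_def par_proj_add)
qed

lemma der_dpar_sder: "D \<in> der br V \<Longrightarrow> sder br V a (dpar V a D)"
  unfolding der_def using dpar_sder_sum by (cases a) auto

lemma der_eq_dpar_sum: "D \<in> der br V \<Longrightarrow> D x = dpar V False D x + dpar V True D x"
  unfolding der_def using dpar_sder_sum by auto

lemma der_clinear: "D \<in> der br V \<Longrightarrow> clinear_map D"
  unfolding der_def clinear_map_def sder_def
  by (auto simp: cscale_right_distrib algebra_simps)

lemma dpar_ad: "dpar V b (br y) = br (pp b y)"
proof -
  have "br y = (\<lambda>x. br (pp False y) x + br (pp True y) x)"
    using br_split_left by blast
  then show ?thesis
    using dpar_sder_sum[OF ad_sder[OF par_proj_in] ad_sder[OF par_proj_in]] by (cases b) auto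
qed

lemma dbr_ad:
  assumes D: "D \<in> der br V"
  shows "dbr V D (br y) = br (D y)"
proof
  fix x
  let ?D = "\<lambda>a. dpar V a D"
  have "dbr V D (br y) x
      = (\<Sum>(a, b)\<in>UNIV. ?D a (br (pp b y) x) - psgn a b *\<^sub>C br (pp b y) (?D a x))"
    unfolding dbr_def dpar_ad ..
  also have "\<dots> = (\<Sum>(a, b)\<in>UNIV. br (?D a (pp b y)) x)"
    using sder_br[OF der_dpar_sder[OF D] par_proj_in] by simp
  also have "\<dots> = br ((?D False (pp False y) + ?D False (pp True y))
                    + (?D True (pp False y) + ?D True (pp True y))) x"
    by (simp add: sum_UNIV_bool_pair br_add_left add.assoc)
  also have "\<dots> = br (D y) x"
  proof -
    have "?D a (pp False y) + ?D a (pp True y) = ?D a y" for a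
      using clinear_map_add[OF sder_clinear[OF der_dpar_sder[OF D, of a]], of "pp False y" "pp True y"]
      by (simp add: par_proj_split)
    then show ?thesis using der_eq_dpar_sum[OF D, of y] by simp
  qed
  finally show "dbr V D (br y) x = br (D y) x" .
qed

end

locale graded_lsa = super_lie br V for br :: "'a::cvec \<Rightarrow> 'a \<Rightarrow> 'a" and V +
  fixes S :: "int \<Rightarrow> 'a set"
  assumes grading: "z_grading br V S"
begin

definition degrees :: "int set" where
  "degrees = {p. S p \<noteq> {0}}"

lemma csubspace_S: "csubspace (S p)"
  using grading by (simp add: z_grading_def)

lemma zero_in_S [simp]: "0 \<in> S p"
  by (rule csubspace_0[OF csubspace_S])

lemma finite_degrees: "finite degrees"
  using grading by (simp add: z_grading_def degrees_def)

lemma S_decomp_unique: "\<exists>!f. (\<forall>p. f p \<in> S p) \<and> x = sum f degrees"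
  using grading unfolding z_grading_def degrees_def by blast

lemma S_par_proj: "x \<in> S p \<Longrightarrow> pp b x \<in> S p"
  using grading by (simp add: z_grading_def)

lemma br_in_S: "x \<in> S p \<Longrightarrow> y \<in> S q \<Longrightarrow> br x y \<in> S (p + q)"
  using grading by (simp add: z_grading_def)

lemma S_outside_degrees: "p \<notin> degrees \<Longrightarrow> x \<in> S p \<Longrightarrow> x = 0"
  by (auto simp: degrees_def)

lemma zproj_eqI:
  assumes "\<forall>p. f p \<in> S p" "x = sum f degrees"
  shows "zproj S p x = f p"
proof -
  have "(THE f. (\<forall>p. f p \<in> S p) \<and> x = sum f degrees) = f"
    using assms by (intro the1_equality[OF S_decomp_unique]) simp
  then show ?thesis by (simp add: zproj_def degrees_def)
qed

lemma zproj_spec: "(\<forall>p. zproj S p x \<in> S p) \<and> sum (\<lambda>p. zproj S p x) degrees = x"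
proof -
  obtain f where "\<forall>p. f p \<in> S p" "x = sum f degrees"
    using S_decomp_unique by blast
  then show ?thesis using zproj_eqI by simp
qed

lemma zproj_in: "zproj S p x \<in> S p"
  and zproj_sum_degrees: "sum (\<lambda>p. zproj S p x) degrees = x"
  using zproj_spec by blast+

lemma zproj_homogeneous: "x \<in> S q \<Longrightarrow> zproj S p x = (if p = q then x else 0)"
proof (rule zproj_eqI)
  assume x: "x \<in> S q"
  then show "\<forall>p. (if p = q then x else 0) \<in> S p" by simp
  have "sum (\<lambda>p. if p = q then x else 0) degrees = (if q \<in> degrees then x else 0)"
    using finite_degrees by (simp add: sum.delta)
  then show "x = sum (\<lambda>p. if p = q then x else 0) degrees"
    using S_outside_degrees[OF _ x] by auto
qed

lemma zproj_same: "x \<in> S p \<Longrightarrow> zproj S p x = x"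
  by (simp add: zproj_homogeneous)

lemma zproj_0 [simp]: "zproj S p 0 = 0"
  using zproj_homogeneous[OF zero_in_S] by simp

lemma zproj_add: "zproj S p (x + y) = zproj S p x + zproj S p y"
  by (rule zproj_eqI) (simp_all add: csubspace_add[OF csubspace_S] zproj_in sum.distrib zproj_sum_degrees)

lemma zproj_scale: "zproj S p (c *\<^sub>C x) = c *\<^sub>C zproj S p x"
  by (rule zproj_eqI) (simp_all add: csubspace_scale[OF csubspace_S] zproj_in zproj_sum_degrees
      flip: cscale_sum)

lemma zproj_diff: "zproj S p (x - y) = zproj S p x - zproj S p y"
  by (rule zproj_eqI) (simp_all add: csubspace_diff[OF csubspace_S] zproj_in sum_subtractf zproj_sum_degrees)

lemma zproj_sum: "zproj S p (sum g A) = (\<Sum>i\<in>A. zproj S p (g i))"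
  by (induct A rule: infinite_finite_induct) (simp_all add: zproj_add)

lemma zproj_par_proj: "zproj S p (pp b x) = pp b (zproj S p x)"
  by (rule zproj_eqI) (simp_all add: S_par_proj zproj_in flip: par_proj_sum, simp add: zproj_sum_degrees)

lemma zproj_shift:
  assumes f: "clinear_map f" and deg: "\<And>s. f ` S s \<subseteq> S (s + q)"
  shows "zproj S r (f a) = f (zproj S (r - q) a)"
proof -
  have fs: "f (zproj S s a) \<in> S (s + q)" for s
    using deg zproj_in by blast
  have "f a = (\<Sum>s\<in>degrees. f (zproj S s a))"
    using clinear_map_sum[OF f, of "\<lambda>s. zproj S s a" degrees] by (simp add: zproj_sum_degrees)
  then have "zproj S r (f a) = (\<Sum>s\<in>degrees. zproj S r (f (zproj S s a)))"
    by (simp add: zproj_sum)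
  also have "\<dots> = (\<Sum>s\<in>degrees. if s = r - q then f (zproj S s a) else 0)"
    by (intro sum.cong refl) (auto simp: zproj_homogeneous[OF fs])
  also have "\<dots> = f (zproj S (r - q) a)"
    using finite_degrees S_outside_degrees[OF _ zproj_in, of "r - q" a] clinear_map_0[OF f]
    by (auto simp: sum.delta)
  finally show ?thesis .
qed

lemma br_zproj_sum_left: "br x y = (\<Sum>q\<in>degrees. br (zproj S q x) y)"
  using br_sum_left[of "\<lambda>q. zproj S q x" degrees y] by (simp add: zproj_sum_degrees)

lemma dcomp_homogeneous:
  assumes "clinear_map D" "\<And>q. D ` S q \<subseteq> S (q + k)"
  shows "dcomp S k D = D"
proof
  fix x
  have "D (zproj S p x) \<in> S (p + k)" for p
    using assms(2) zproj_in by blast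
  then have "zproj S (p + k) (D (zproj S p x)) = D (zproj S p x)" for p
    by (rule zproj_same)
  then have "dcomp S k D x = (\<Sum>p\<in>degrees. D (zproj S p x))"
    unfolding dcomp_def degrees_def[symmetric] by simp
  also have "\<dots> = D x"
    using clinear_map_sum[OF assms(1), of "\<lambda>p. zproj S p x" degrees] by (simp add: zproj_sum_degrees)
  finally show "dcomp S k D x = D x" .
qed

lemma dcomp_ad: "dcomp S k (br x) = br (zproj S k x)"
proof
  fix y
  have "dcomp S k (br x) y = (\<Sum>p\<in>degrees. br (zproj S k x) (zproj S p y))"
    unfolding dcomp_def degrees_def[symmetric]
  proof (intro sum.cong refl)
    fix p
    have "zproj S (p + k) (br x (zproj S p y)) = br (zproj S (p + k - p) x) (zproj S p y)"
      by (rule zproj_shift[OF clinear_map_br_left]) (use br_in_S zproj_in in blast)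
    then show "zproj S (p + k) (br x (zproj S p y)) = br (zproj S k x) (zproj S p y)"
      by simp
  qed
  also have "\<dots> = br (zproj S k x) y"
    using br_sum_right[of "zproj S k x" "\<lambda>p. zproj S p y" degrees] by (simp add: zproj_sum_degrees)
  finally show "dcomp S k (br x) y = br (zproj S k x) y" .
qed

lemma dcomp_diff: "dcomp S k (\<lambda>y. D y - E y) = (\<lambda>y. dcomp S k D y - dcomp S k E y)"
  by (simp add: dcomp_def zproj_diff sum_subtractf)

lemma dpar_vanish_on_S: "\<forall>z\<in>S q. D z = 0 \<Longrightarrow> z \<in> S q \<Longrightarrow> dpar V a D z = 0"
  by (simp add: dpar_vanish S_par_proj)

end

text \<open>For a grading of depth one, the closure of \<open>X\<close> under the brackets with
  \<open>s\<^sup>p\<close>, \<open>p \<ge> 0\<close>, is already the graded ideal generated by \<open>X\<close> once the brackets of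
  \<open>s\<^sup>-\<^sup>1\<close> with \<open>X\<close> lie in it, and its degree \<open>-1\<close> part is reached from
  \<open>X\<close> through \<open>s\<^sup>0\<close> only.\<close>

inductive_set nonneg_ad_closure ::
  "('a::cvec \<Rightarrow> 'a \<Rightarrow> 'a) \<Rightarrow> (int \<Rightarrow> 'a set) \<Rightarrow> 'a set \<Rightarrow> 'a set"
  for br S X
where
  base: "x \<in> X \<Longrightarrow> x \<in> nonneg_ad_closure br S X"
| zero: "0 \<in> nonneg_ad_closure br S X"
| add: "a \<in> nonneg_ad_closure br S X \<Longrightarrow> b \<in> nonneg_ad_closure br S X \<Longrightarrow>
    a + b \<in> nonneg_ad_closure br S X"
| scale: "a \<in> nonneg_ad_closure br S X \<Longrightarrow> c *\<^sub>C a \<in> nonneg_ad_closure br S X"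
| bracket: "a \<in> nonneg_ad_closure br S X \<Longrightarrow> u \<in> S q \<Longrightarrow> 0 \<le> q \<Longrightarrow>
    br u a \<in> nonneg_ad_closure br S X"

lemma nonneg_ad_closure_sum:
  "(\<And>i. i \<in> I \<Longrightarrow> f i \<in> nonneg_ad_closure br S X) \<Longrightarrow>
    sum f I \<in> nonneg_ad_closure br S X"
  by (induct I rule: infinite_finite_induct) (auto intro: nonneg_ad_closure.intros)

locale simple_graded_lsa = graded_lsa br V S for br :: "'a::cvec \<Rightarrow> 'a \<Rightarrow> 'a" and V S +
  assumes simple: "simple_lsa br V" and depth_one: "depth_one S"
begin

lemma graded_ideal_trivial: "graded_ideal br V I \<Longrightarrow> I = {0} \<or> I = UNIV"
  using simple by (simp add: simple_lsa_def)

lemma br_nonzero: "\<exists>x y. br x y \<noteq> 0"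
  using simple by (simp add: simple_lsa_def)

lemma S_below_depth: "p < -1 \<Longrightarrow> x \<in> S p \<Longrightarrow> x = 0"
  using depth_one by (auto simp: depth_one_def)

lemma zproj_below_depth: "p < -1 \<Longrightarrow> zproj S p x = 0"
  using S_below_depth zproj_in by blast

lemma S_minus_one_nonzero:
  obtains w where "w \<in> S (-1)" "w \<noteq> 0"
  using depth_one zero_in_S by (auto simp: depth_one_def)

lemma ad_eq_0_iff [simp]: "br z = (\<lambda>_. 0) \<longleftrightarrow> z = 0"
proof
  assume z: "br z = (\<lambda>_. 0)"
  define Z where "Z = {w. \<forall>x. br w x = 0}"
  have Z_par_proj: "pp b w \<in> Z" if "w \<in> Z" for w b
  proof -
    have "br (pp b w) (pp c x) = 0" for c x
      using br_par_proj_left[OF par_proj_in[of c x], of b w] that by (simp add: Z_def)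
    then have "br (pp b w) x = 0" for x
      using br_split_right[of "pp b w" x] by simp
    then show ?thesis by (simp add: Z_def)
  qed
  have Z_left: "br x w = 0" if "w \<in> Z" for w x
  proof -
    have "br (pp a x) (pp b w) = 0" for a b
      using br_anticomm[OF par_proj_in par_proj_in, of a x b w] Z_par_proj[OF that]
      by (simp add: Z_def)
    then have "br (pp a x) w = 0" for a
      using br_split_right[of "pp a x" w] by simp
    then show ?thesis
      using br_split_left[of x w] by simp
  qed
  have "graded_ideal br V Z"
    unfolding graded_ideal_def csubspace_def
  proof (intro conjI ballI allI)
    show "x + y \<in> Z" "c *\<^sub>C x \<in> Z" if "x \<in> Z" "y \<in> Z" for x y c
      using that by (simp_all add: Z_def br_add_left br_scale_left)
    show "br x y \<in> Z" if "y \<in> Z" for x y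
      using Z_left[OF that] by (simp add: Z_def)
  qed (use Z_par_proj in \<open>simp_all add: Z_def\<close>)
  moreover have "Z \<noteq> UNIV"
    using br_nonzero by (auto simp: Z_def)
  ultimately have "Z = {0}"
    using graded_ideal_trivial by blast
  moreover have "z \<in> Z"
    using z by (simp add: Z_def)
  ultimately show "z = 0" by blast
qed simp

lemma nonneg_ad_closure_br_minus_one:
  assumes X: "\<forall>x\<in>X. \<forall>y\<in>S (-1). br y x \<in> nonneg_ad_closure br S X"
  shows "a \<in> nonneg_ad_closure br S X \<Longrightarrow> \<forall>y\<in>S (-1). br y a \<in> nonneg_ad_closure br S X"
proof (induct a rule: nonneg_ad_closure.induct)
  case (bracket a u q)
  show ?case
  proof
    fix y assume y: "y \<in> S (-1)"
    have "br (pp c y) (br (pp d u) a) \<in> nonneg_ad_closure br S X" for c d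
    proof -
      have yc: "pp c y \<in> S (-1)" and ud: "pp d u \<in> S q"
        using S_par_proj y bracket.hyps(3) by blast+
      have "br (br (pp c y) (pp d u)) a \<in> nonneg_ad_closure br S X"
      proof (cases "q = 0")
        case True
        then show ?thesis using bracket.hyps(2) br_in_S[OF yc ud] by simp
      next
        case False
        then show ?thesis
          using nonneg_ad_closure.bracket[OF bracket.hyps(1) br_in_S[OF yc ud]] bracket.hyps(4) by simp
      qed
      moreover have "br (pp c y) a \<in> nonneg_ad_closure br S X"
        using bracket.hyps(2) yc by blast
      then have "br (pp d u) (br (pp c y) a) \<in> nonneg_ad_closure br S X"
        using nonneg_ad_closure.bracket ud bracket.hyps(4) by blast
      ultimately show ?thesis
        unfolding br_jacobi[OF par_proj_in[of c y] par_proj_in[of d u]]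
        by (intro nonneg_ad_closure.add nonneg_ad_closure.scale)
    qed
    then show "br y (br u a) \<in> nonneg_ad_closure br S X"
      using br_split_left[of y "br u a"] br_split_left[of u a]
      by (simp add: br_add_right nonneg_ad_closure.add)
  qed
qed (use X in \<open>simp_all add: br_add_right br_scale_right nonneg_ad_closure.zero
  nonneg_ad_closure.add nonneg_ad_closure.scale\<close>)

lemma nonneg_ad_closure_br:
  assumes X: "\<forall>x\<in>X. \<forall>y\<in>S (-1). br y x \<in> nonneg_ad_closure br S X"
    and a: "a \<in> nonneg_ad_closure br S X"
  shows "br x a \<in> nonneg_ad_closure br S X"
  unfolding br_zproj_sum_left[of x a]
proof (rule nonneg_ad_closure_sum)
  fix q :: int
  consider "0 \<le> q" | "q = -1" | "q < -1" by linarith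
  then show "br (zproj S q x) a \<in> nonneg_ad_closure br S X"
    using nonneg_ad_closure.bracket[OF a zproj_in] nonneg_ad_closure_br_minus_one[OF X a] zproj_in
      zproj_below_depth nonneg_ad_closure.zero
    by cases auto
qed

lemma nonneg_ad_closure_par_proj:
  assumes X: "\<forall>x\<in>X. \<forall>b. pp b x \<in> nonneg_ad_closure br S X"
  shows "a \<in> nonneg_ad_closure br S X \<Longrightarrow> pp b a \<in> nonneg_ad_closure br S X"
proof (induct a arbitrary: b rule: nonneg_ad_closure.induct)
  case (bracket a u q)
  have "pp b (br (pp c u) (pp d a)) \<in> nonneg_ad_closure br S X" for c d
  proof -
    have "br (pp c u) (pp d a) \<in> nonneg_ad_closure br S X"
      using nonneg_ad_closure.bracket bracket.hyps(2) S_par_proj[OF bracket.hyps(3)] bracket.hyps(4)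
      by blast
    moreover have "pp b (br (pp c u) (pp d a)) = (if b = (c \<noteq> d) then br (pp c u) (pp d a) else 0)"
      by (rule par_proj_homogeneous[OF br_in_V[OF par_proj_in par_proj_in]])
    ultimately show ?thesis
      using nonneg_ad_closure.zero[of br S X] by simp
  qed
  moreover have "br u a = (br (pp False u) (pp False a) + br (pp False u) (pp True a))
      + (br (pp True u) (pp False a) + br (pp True u) (pp True a))"
    using br_split_left[of u a] br_split_right[of "pp False u" a] br_split_right[of "pp True u" a]
    by simp
  ultimately show ?case
    by (simp only: par_proj_add) (intro nonneg_ad_closure.add)
qed (use X in \<open>simp_all add: par_proj_add par_proj_scale nonneg_ad_closure.zero
  nonneg_ad_closure.add nonneg_ad_closure.scale\<close>)

lemma nonneg_ad_closure_graded_ideal: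
  assumes "\<forall>x\<in>X. \<forall>y\<in>S (-1). br y x \<in> nonneg_ad_closure br S X"
    and "\<forall>x\<in>X. \<forall>b. pp b x \<in> nonneg_ad_closure br S X"
  shows "graded_ideal br V (nonneg_ad_closure br S X)"
  unfolding graded_ideal_def csubspace_def
  using nonneg_ad_closure_br[OF assms(1)] nonneg_ad_closure_par_proj[OF assms(2)]
  by (simp add: nonneg_ad_closure.zero nonneg_ad_closure.add nonneg_ad_closure.scale)

lemma nonneg_ad_closure_zproj_minus_one:
  assumes Y: "csubspace Y" and X: "\<forall>x\<in>X. zproj S (-1) x \<in> Y"
    and inv: "\<forall>u\<in>S 0. \<forall>y\<in>Y. br u y \<in> Y"
  shows "a \<in> nonneg_ad_closure br S X \<Longrightarrow> zproj S (-1) a \<in> Y"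
proof (induct a rule: nonneg_ad_closure.induct)
  case (bracket a u q)
  have "zproj S (-1) (br u a) = br u (zproj S (-1 - q) a)"
    by (rule zproj_shift[OF clinear_map_br]) (use br_in_S[OF bracket.hyps(3)] in \<open>auto simp: add.commute\<close>)
  moreover have "br u (zproj S (-1 - q) a) \<in> Y"
  proof (cases "q = 0")
    case True
    then show ?thesis using inv bracket.hyps(2,3) by simp
  next
    case False
    then show ?thesis using bracket.hyps(4) zproj_below_depth csubspace_0[OF Y] by simp
  qed
  ultimately show ?case by simp
qed (use X Y in \<open>simp_all add: zproj_add zproj_scale csubspace_0 csubspace_add csubspace_scale\<close>)

lemma S_transitive:
  assumes p: "0 \<le> p" and z: "z \<in> S p" and kill: "\<forall>y\<in>S (-1). br y z = 0"
  shows "z = 0"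
proof -
  define C where "C = nonneg_ad_closure br S (range (\<lambda>b. pp b z))"
  have "br y (pp c z) = 0" if y: "y \<in> S (-1)" for y c
  proof -
    have "br (pp d y) (pp c z) = 0" for d
      using br_par_proj_right[OF par_proj_in[of d y], of c z] kill S_par_proj[OF y] by simp
    then show ?thesis
      using br_split_left[of y "pp c z"] by simp
  qed
  moreover have "pp b (pp c z) \<in> C" for b c
    using par_proj_homogeneous[OF par_proj_in[of c z], of b] nonneg_ad_closure.base[of "pp c z"]
      nonneg_ad_closure.zero[of br S]
    by (simp add: C_def)
  ultimately have "graded_ideal br V C"
    unfolding C_def by (intro nonneg_ad_closure_graded_ideal) (auto intro: nonneg_ad_closure.zero)
  moreover have "C \<noteq> UNIV"
  proof
    assume C: "C = UNIV"
    obtain w where w: "w \<in> S (-1)" "w \<noteq> 0"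
      by (rule S_minus_one_nonzero)
    have "csubspace {0}"
      by (simp add: csubspace_def)
    moreover have "\<forall>x\<in>range (\<lambda>b. pp b z). zproj S (-1) x \<in> {0}"
      using p by (auto simp: zproj_par_proj zproj_homogeneous[OF z])
    moreover have "\<forall>u\<in>S 0. \<forall>y\<in>{0}. br u y \<in> {0}"
      by simp
    moreover have "w \<in> nonneg_ad_closure br S (range (\<lambda>b. pp b z))"
      using C by (simp add: C_def)
    ultimately have "zproj S (-1) w \<in> {0}"
      by (rule nonneg_ad_closure_zproj_minus_one)
    then show False
      using zproj_same[OF w(1)] w(2) by simp
  qed
  ultimately have "C = {0}"
    using graded_ideal_trivial by blast
  moreover have "pp b z \<in> C" for b
    unfolding C_def by (rule nonneg_ad_closure.base) simp
  ultimately have "pp b z = 0" for b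
    by blast
  then show ?thesis
    using par_proj_split[of z] by simp
qed

lemma S_minus_one_irreducible:
  assumes W: "W \<subseteq> S (-1)" "csubspace W" "\<forall>y\<in>W. \<forall>b. pp b y \<in> W"
    and inv: "\<forall>u\<in>S 0. \<forall>y\<in>W. br u y \<in> W"
  shows "W = {0} \<or> W = S (-1)"
proof -
  have "br y x = 0" if "x \<in> W" "y \<in> S (-1)" for x y
  proof -
    have "br y x \<in> S (-1 + -1)"
      using br_in_S that W(1) by blast
    then show ?thesis
      using S_below_depth[of "-1 + -1"] by simp
  qed
  then have "graded_ideal br V (nonneg_ad_closure br S W)"
    using W(3) by (intro nonneg_ad_closure_graded_ideal) (auto intro: nonneg_ad_closure.zero nonneg_ad_closure.base)
  then consider "nonneg_ad_closure br S W = {0}" | "nonneg_ad_closure br S W = UNIV"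
    using graded_ideal_trivial by blast
  then show ?thesis
  proof cases
    case 1
    then have "W \<subseteq> {0}"
      using nonneg_ad_closure.base by blast
    then show ?thesis
      using csubspace_0[OF W(2)] by blast
  next
    case 2
    have "\<forall>x\<in>W. zproj S (-1) x \<in> W"
      using W(1) zproj_same by auto
    then have "zproj S (-1) w \<in> W" for w
      using nonneg_ad_closure_zproj_minus_one[OF W(2) _ inv] 2 by blast
    then have "S (-1) \<subseteq> W"
      using zproj_same by (metis subsetI)
    then show ?thesis
      using W(1) by blast
  qed
qed

lemma S_one_nonzero: "S 1 \<noteq> {0}"
proof
  assume S1: "S 1 = {0}"
  have S_pos: "\<forall>z\<in>S p. z = 0" if "1 \<le> p" for p
    using that
  proof (induct p rule: int_ge_induct)
    case (step p)
    show ?case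
    proof
      fix z assume z: "z \<in> S (p + 1)"
      have "br y z = 0" if "y \<in> S (-1)" for y
        using br_in_S[OF that z] step.hyps(2) by simp
      then show "z = 0"
        using S_transitive[OF _ z] step.hyps(1) by simp
    qed
  qed (use S1 in blast)
  have "br x y \<in> S (-1)" if y: "y \<in> S (-1)" for x y
    unfolding br_zproj_sum_left[of x y]
  proof (rule csubspace_sum[OF csubspace_S])
    fix q :: int
    have xy: "br (zproj S q x) y \<in> S (q + -1)"
      using br_in_S[OF zproj_in y] .
    consider "q = 0" | "1 \<le> q" | "q \<le> -1" by linarith
    then show "br (zproj S q x) y \<in> S (-1)"
    proof cases
      case 2
      then have "zproj S q x = 0"
        using S_pos zproj_in by blast
      then show ?thesis by simp
    next
      case 3
      then show ?thesis using S_below_depth[OF _ xy] by simp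
    qed (use xy in simp)
  qed
  then have "graded_ideal br V (S (-1))"
    unfolding graded_ideal_def using csubspace_S S_par_proj by blast
  then have "S (-1) = UNIV"
    using graded_ideal_trivial depth_one by (auto simp: depth_one_def)
  then have "br x y = 0" for x y
    using br_in_S[of x "-1" y "-1"] S_below_depth[of "-2" "br x y"] by simp
  then show False
    using br_nonzero by blast
qed

lemma br_der_eq_0:
  assumes D: "D \<in> der br V"
    and kill: "\<forall>z\<in>S (-1). D z = 0" "\<forall>z\<in>S q. D z = 0"
    and x: "x \<in> S (q + 1)" and y: "y \<in> S (-1)"
  shows "br y (D x) = 0"
proof -
  have "br (pp d y) (dpar V a D x) = 0" for a d
  proof -
    have yd: "pp d y \<in> S (-1)"
      using S_par_proj[OF y] .
    have "br (pp d y) x \<in> S q"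
      using br_in_S[OF yd x] by simp
    then have "dpar V a D (br (pp d y) x) = 0" "dpar V a D (pp d y) = 0"
      using dpar_vanish_on_S kill yd by blast+
    then show ?thesis
      using sder_br[OF der_dpar_sder[OF D] par_proj_in, of a d y x] by simp
  qed
  then show ?thesis
    using br_split_left[of y "D x"] der_eq_dpar_sum[OF D, of x] by (simp add: br_add_right)
qed

lemma der_deg_eq_0_if_kills_S_minus_one:
  assumes D: "D \<in> der_deg br V S p" and p: "0 \<le> p" and kill: "\<forall>y\<in>S (-1). D y = 0"
  shows "D = (\<lambda>_. 0)"
proof
  have Dder: "D \<in> der br V" and deg: "\<And>q. D ` S q \<subseteq> S (q + p)"
    using D by (auto simp: der_deg_def)
  have kills: "\<forall>x\<in>S q. D x = 0" if "-1 \<le> q" for q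
    using that
  proof (induct q rule: int_ge_induct)
    case (step q)
    show ?case
    proof
      fix x assume x: "x \<in> S (q + 1)"
      have "D x \<in> S (q + 1 + p)"
        using deg x by blast
      moreover have "\<forall>y\<in>S (-1). br y (D x) = 0"
        using br_der_eq_0[OF Dder kill step.hyps(2) x] by blast
      ultimately show "D x = 0"
        using S_transitive[of "q + 1 + p" "D x"] step.hyps(1) p by simp
    qed
  qed (use kill in blast)
  fix x
  have "D x = (\<Sum>q\<in>degrees. D (zproj S q x))"
    using clinear_map_sum[OF der_clinear[OF Dder], of "\<lambda>q. zproj S q x" degrees]
    by (simp add: zproj_sum_degrees)
  also have "\<dots> = 0"
  proof -
    have "D (zproj S q x) = 0" for q
    proof (cases "-1 \<le> q")
      case True
      then show ?thesis using kills zproj_in by blast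
    next
      case False
      then show ?thesis using zproj_below_depth clinear_map_0[OF der_clinear[OF Dder]] by simp
    qed
    then show ?thesis by simp
  qed
  finally show "D x = 0" .
qed

end

locale graded_der_subalgebra = simple_graded_lsa br V S for br :: "'a::cvec \<Rightarrow> 'a \<Rightarrow> 'a" and V S +
  fixes Out G :: "('a \<Rightarrow> 'a) set"
  assumes out_complement: "out_complement br V S Out"
    and range_ad_subset: "range br \<subseteq> G" and G_der: "G \<subseteq> der br V"
    and G_subalg: "subalg_der V G" and G_graded: "graded_sub V S G"
begin

lemma G_fsubspace: "fsubspace G"
  using G_subalg by (simp add: subalg_der_def)

lemma ad_in_G: "br x \<in> G"
  using range_ad_subset by blast

lemma Out_der: "Out \<subseteq> der br V"
  and Out_subalg: "subalg_der V Out"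
  and Out_graded: "graded_sub V S Out"
  and der_eq_ad_plus_Out: "D \<in> der br V \<Longrightarrow> \<exists>x. \<exists>E\<in>Out. D = (\<lambda>y. br x y + E y)"
  and ad_in_Out_eq_0: "br x \<in> Out \<Longrightarrow> br x = (\<lambda>_. 0)"
  using out_complement unfolding out_complement_def by blast+

lemma zero_in_Out: "(\<lambda>_. 0) \<in> Out"
  using Out_subalg by (simp add: subalg_der_def fsubspace_def)

lemma zero_in_der_deg: "(\<lambda>_. 0) \<in> der_deg br V S k"
  using zero_in_Out Out_der by (auto simp: der_deg_def)

lemma ad_in_der_deg: "x \<in> S k \<Longrightarrow> br x \<in> der_deg br V S k"
  using ad_der br_in_S[of x k] by (auto simp: der_deg_def add.commute)

lemma ad_in_gdeg: "x \<in> S k \<Longrightarrow> br x \<in> gdeg br V S G k"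
  using ad_in_der_deg ad_in_G by (simp add: gdeg_def)

lemma gdeg_minus_one_nonzero: "gdeg br V S G (-1) \<noteq> {\<lambda>_. 0}"
proof -
  obtain w where "w \<in> S (-1)" "w \<noteq> 0"
    by (rule S_minus_one_nonzero)
  then show ?thesis
    using ad_in_gdeg[of w "-1"] ad_eq_0_iff[of w] by blast
qed

lemma G_eq_ad_plus_G_Out: "G = {(\<lambda>y. br x y + E y) | x E. E \<in> G \<inter> Out}"
proof
  show "G \<subseteq> {(\<lambda>y. br x y + E y) | x E. E \<in> G \<inter> Out}"
  proof
    fix D assume D: "D \<in> G"
    then obtain x E where E: "E \<in> Out" "D = (\<lambda>y. br x y + E y)"
      using der_eq_ad_plus_Out G_der by blast
    then have "E = (\<lambda>y. D y - br x y)"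
      by auto
    then have "E \<in> G"
      using fsubspace_diff[OF G_fsubspace D ad_in_G] by simp
    then show "D \<in> {(\<lambda>y. br x y + E y) | x E. E \<in> G \<inter> Out}"
      using E by blast
  qed
  show "{(\<lambda>y. br x y + E y) | x E. E \<in> G \<inter> Out} \<subseteq> G"
    using fsubspace_add[OF G_fsubspace ad_in_G] by blast
qed

lemma G_Out_subalg: "subalg_der V (G \<inter> Out)"
  using G_subalg Out_subalg unfolding subalg_der_def fsubspace_def by blast

lemma G_Out_graded: "graded_sub V S (G \<inter> Out)"
  using G_graded Out_graded unfolding graded_sub_def by blast

lemma G_transitive: "transitive_g br V S G"
  unfolding transitive_g_def
proof (intro allI impI ballI)
  fix p D
  assume p: "0 \<le> p" and D: "D \<in> gdeg br V S G p"
    and hyp: "\<forall>E\<in>gdeg br V S G (-1). dbr V D E = (\<lambda>_. 0)"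
  have D_deg: "D \<in> der_deg br V S p"
    using D by (simp add: gdeg_def)
  have "br (D y) = (\<lambda>_. 0)" if "y \<in> S (-1)" for y
    using hyp ad_in_gdeg[OF that] dbr_ad[of D y] D_deg by (simp add: der_deg_def)
  then have "D y = 0" if "y \<in> S (-1)" for y
    using that by simp
  then show "D = (\<lambda>_. 0)"
    using der_deg_eq_0_if_kills_S_minus_one[OF D_deg p] by blast
qed

lemma G_nonlinear: "nonlinear_g br V S G"
proof -
  obtain x where "x \<in> S 1" "x \<noteq> 0"
    using S_one_nonzero zero_in_S by blast
  then show ?thesis
    using ad_in_gdeg[of x 1] ad_eq_0_iff[of x] by (auto simp: nonlinear_g_def)
qed

lemma gdeg_inner_if_no_outer:
  assumes F: "(G \<inter> Out) \<inter> der_deg br V S p = {\<lambda>_. 0}" and D: "D \<in> gdeg br V S G p"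
  shows "\<exists>x\<in>S p. D = br x"
proof -
  have DG: "D \<in> G" and Dder: "D \<in> der br V" and deg: "\<And>q. D ` S q \<subseteq> S (q + p)"
    using D by (auto simp: gdeg_def der_deg_def)
  obtain x E where E: "E \<in> Out" "D = (\<lambda>y. br x y + E y)"
    using der_eq_ad_plus_Out Dder by blast
  then have E_eq: "E = (\<lambda>y. D y - br x y)"
    by auto
  let ?E = "\<lambda>y. D y - br (zproj S p x) y"
  have "E \<in> G"
    using fsubspace_diff[OF G_fsubspace DG ad_in_G] E_eq by simp
  then have "dcomp S p E \<in> G \<inter> Out"
    using G_graded Out_graded E(1) unfolding graded_sub_def by blast
  moreover have "dcomp S p E = ?E"
    unfolding E_eq dcomp_diff dcomp_ad dcomp_homogeneous[OF der_clinear[OF Dder] deg] ..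
  ultimately have "?E \<in> G \<inter> Out"
    by simp
  moreover have "?E y \<in> S (q + p)" if "y \<in> S q" for y q
  proof -
    have "br (zproj S p x) y \<in> S (q + p)"
      using br_in_S[OF zproj_in that] by (simp add: add.commute)
    then show ?thesis
      using deg that csubspace_diff[OF csubspace_S] by blast
  qed
  ultimately have "?E \<in> (G \<inter> Out) \<inter> der_deg br V S p"
    using Out_der by (auto simp: der_deg_def)
  then have "?E = (\<lambda>_. 0)"
    using F by blast
  then have "D = br (zproj S p x)"
    by (simp add: fun_eq_iff)
  then show ?thesis
    using zproj_in by blast
qed

lemma ad_S_minus_one_submodule:
  "br ` S (-1) \<subseteq> gdeg br V S G (-1)" "fsubspace (br ` S (-1))"
  "\<forall>D\<in>br ` S (-1). \<forall>b. dpar V b D \<in> br ` S (-1)"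
  "\<forall>X\<in>gdeg br V S G 0. \<forall>D\<in>br ` S (-1). dbr V X D \<in> br ` S (-1)"
proof -
  show "br ` S (-1) \<subseteq> gdeg br V S G (-1)"
    using ad_in_gdeg by blast
  show "fsubspace (br ` S (-1))"
    unfolding fsubspace_def
  proof (intro conjI ballI allI)
    show "(\<lambda>_. 0) \<in> br ` S (-1)"
      using image_eqI[of "\<lambda>_. 0" br 0 "S (-1)"] by simp
    fix D E c assume "D \<in> br ` S (-1)" "E \<in> br ` S (-1)"
    then obtain x y where xy: "x \<in> S (-1)" "y \<in> S (-1)" and "D = br x" "E = br y"
      by blast
    then have "(\<lambda>z. D z + E z) = br (x + y)"
      by (simp add: ad_add)
    then show "(\<lambda>z. D z + E z) \<in> br ` S (-1)"
      using imageI[OF csubspace_add[OF csubspace_S xy], of br] by simp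
  next
    fix c D assume "D \<in> br ` S (-1)"
    then obtain x where x: "x \<in> S (-1)" and "D = br x"
      by blast
    then have "(\<lambda>z. c *\<^sub>C D z) = br (c *\<^sub>C x)"
      by (simp add: ad_scale)
    then show "(\<lambda>z. c *\<^sub>C D z) \<in> br ` S (-1)"
      using imageI[OF csubspace_scale[OF csubspace_S x], of br] by simp
  qed
  show "\<forall>D\<in>br ` S (-1). \<forall>b. dpar V b D \<in> br ` S (-1)"
    using dpar_ad S_par_proj by auto
  show "\<forall>X\<in>gdeg br V S G 0. \<forall>D\<in>br ` S (-1). dbr V X D \<in> br ` S (-1)"
    by (auto simp: gdeg_def der_deg_def dbr_ad)
qed

lemma gdeg_minus_one_eq_ad_if_irreducible:
  assumes "irreducible_g br V S G"
  shows "gdeg br V S G (-1) = br ` S (-1)"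
proof -
  obtain w where w: "w \<in> S (-1)" "w \<noteq> 0"
    by (rule S_minus_one_nonzero)
  then have "br ` S (-1) \<noteq> {\<lambda>_. 0}"
    using ad_eq_0_iff[of w] by blast
  moreover have "br ` S (-1) = {\<lambda>_. 0} \<or> br ` S (-1) = gdeg br V S G (-1)"
    using assms ad_S_minus_one_submodule unfolding irreducible_g_def by blast
  ultimately show ?thesis by simp
qed

lemma irreducible_if_gdeg_minus_one_eq_ad:
  assumes G1: "gdeg br V S G (-1) = br ` S (-1)"
  shows "irreducible_g br V S G"
  unfolding irreducible_g_def
proof (intro conjI allI impI)
  show "gdeg br V S G (-1) \<noteq> {\<lambda>_. 0}"
    by (rule gdeg_minus_one_nonzero)
  fix W
  assume "W \<subseteq> gdeg br V S G (-1) \<and> fsubspace W \<and> (\<forall>D\<in>W. \<forall>b. dpar V b D \<in> W) \<and>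
    (\<forall>X\<in>gdeg br V S G 0. \<forall>D\<in>W. dbr V X D \<in> W)"
  then have W: "W \<subseteq> br ` S (-1)" "fsubspace W" "\<forall>D\<in>W. \<forall>b. dpar V b D \<in> W"
      "\<forall>X\<in>gdeg br V S G 0. \<forall>D\<in>W. dbr V X D \<in> W"
    using G1 by auto
  define Y where "Y = {y \<in> S (-1). br y \<in> W}"
  have W_eq: "W = br ` Y"
    using W(1) by (auto simp: Y_def)
  have "csubspace Y"
    unfolding csubspace_def Y_def
    using fsubspace_0[OF W(2)] fsubspace_add[OF W(2)] fsubspace_scale[OF W(2)]
      csubspace_add[OF csubspace_S] csubspace_scale[OF csubspace_S]
    by (simp add: ad_add ad_scale)
  moreover have "\<forall>y\<in>Y. \<forall>b. pp b y \<in> Y"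
    using W(3) dpar_ad S_par_proj by (auto simp: Y_def)
  moreover have "\<forall>u\<in>S 0. \<forall>y\<in>Y. br u y \<in> Y"
    using W(4) ad_in_gdeg[of _ 0] dbr_ad[OF ad_der] br_in_S[of _ 0 _ "-1"] by (fastforce simp: Y_def)
  ultimately have "Y = {0} \<or> Y = S (-1)"
    using S_minus_one_irreducible[of Y] by (auto simp: Y_def)
  then show "W = {\<lambda>_. 0} \<or> W = gdeg br V S G (-1)"
    using W_eq G1 by auto
qed

lemma depth_one_irreducible_iff:
  "depth_one_g br V S G \<and> irreducible_g br V S G \<longleftrightarrow>
    (\<forall>p < 0. (G \<inter> Out) \<inter> der_deg br V S p = {\<lambda>_. 0})"
proof
  assume A: "depth_one_g br V S G \<and> irreducible_g br V S G"
  have "E = (\<lambda>_. 0)" if "p < 0" "E \<in> (G \<inter> Out) \<inter> der_deg br V S p" for p E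
  proof (cases "p = -1")
    case True
    then have "E \<in> br ` S (-1)"
      using that(2) gdeg_minus_one_eq_ad_if_irreducible A by (auto simp: gdeg_def)
    then show ?thesis
      using that(2) ad_in_Out_eq_0 by auto
  next
    case False
    then have "gdeg br V S G p = {\<lambda>_. 0}"
      using A that(1) by (simp add: depth_one_g_def)
    then show ?thesis
      using that(2) by (auto simp: gdeg_def)
  qed
  then show "\<forall>p < 0. (G \<inter> Out) \<inter> der_deg br V S p = {\<lambda>_. 0}"
    using zero_in_Out zero_in_der_deg fsubspace_0[OF G_fsubspace] by blast
next
  assume F: "\<forall>p < 0. (G \<inter> Out) \<inter> der_deg br V S p = {\<lambda>_. 0}"
  have G_neg: "gdeg br V S G p = br ` S p" if "p < 0" for p
    using gdeg_inner_if_no_outer F that ad_in_gdeg by blast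
  have "S p = {0}" if "p < -1" for p
    using S_below_depth[OF that] zero_in_S by blast
  then have "depth_one_g br V S G"
    using gdeg_minus_one_nonzero G_neg by (simp add: depth_one_g_def)
  moreover have "irreducible_g br V S G"
    using irreducible_if_gdeg_minus_one_eq_ad G_neg by simp
  ultimately show "depth_one_g br V S G \<and> irreducible_g br V S G" ..
qed

end

theorem proposition3p11:
  fixes br :: "'a::cvec \<Rightarrow> 'a \<Rightarrow> 'a"
    and V :: "bool \<Rightarrow> 'a set" and S :: "int \<Rightarrow> 'a set"
    and Out G :: "('a \<Rightarrow> 'a) set"
  assumes "fin_dim_C (UNIV :: 'a set)"
    and "simple_lsa br V"
    and "z_grading br V S" and "depth_one S"
    and "out_complement br V S Out"
    and "range br \<subseteq> G" and "G \<subseteq> der br V"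
    and "subalg_der V G" and "graded_sub V S G"
  shows "G = {(\<lambda>y. br x y + E y) | x E. E \<in> G \<inter> Out}
    \<and> G \<inter> Out \<subseteq> Out \<and> subalg_der V (G \<inter> Out) \<and> graded_sub V S (G \<inter> Out)
    \<and> transitive_g br V S G \<and> nonlinear_g br V S G
    \<and> ((depth_one_g br V S G \<and> irreducible_g br V S G) \<longleftrightarrow>
        (\<forall>p < 0. (G \<inter> Out) \<inter> der_deg br V S p = {\<lambda>_. 0}))"
proof -
  interpret graded_der_subalgebra br V S Out G
    by unfold_locales (use assms(2-) in \<open>simp_all add: simple_lsa_def\<close>)
  show ?thesis
    using G_eq_ad_plus_G_Out G_Out_subalg G_Out_graded G_transitive G_nonlinear
      depth_one_irreducible_iff by blast
qed

end
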